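(* Let $g=(g_0,g_1,g_2,g_3)\in\mathbb{R}^4$ with $g_0<g_2$ and $g_1<g_3$ be a fixed ground-truth box, and let $L_i\le U_i$ ($i=0,1,2,3$) be real numbers with $L_2>0$ and $L_3>0$. Consider the problem of maximising $\mathrm{IoU}(\mathbf z,g)$ over $\mathbf z=(z_0,z_1,z_2,z_3)\in\mathbb{R}^4$ subject to the constraints $$L_0\le z_0+z_2\le U_0,\qquad L_1\le z_1+z_3\le U_1,\qquad L_2\le z_2-z_0\le U_2,\qquad L_3\le z_3-z_1\le U_3,$$ and let $F$ denote the set of $\mathbf z$ satisfying these constraints. Define the finite sets of planar points $$P^c_x=\Big\{\big(\tfrac{U_0-U_2}{2},\tfrac{U_0+U_2}{2}\big),\big(\tfrac{U_0-L_2}{2},\tfrac{U_0+L_2}{2}\big),\big(\tfrac{L_0-U_2}{2},\tfrac{L_0+U_2}{2}\big),\big(\tfrac{L_0-L_2}{2},\tfrac{L_0+L_2}{2}\big)\Big\},$$ $$P^c_y=\Big\{\big(\tfrac{U_1-U_3}{2},\tfrac{U_1+U_3}{2}\big),\big(\tfrac{U_1-L_3}{2},\tfrac{U_1+L_3}{2}\big),\big(\tfrac{L_1-U_3}{2},\tfrac{L_1+U_3}{2}\big),\big(\tfrac{L_1-L_3}{2},\tfrac{L_1+L_3}{2}\big)\Big\},$$ $$P^{\mathrm{int}}_x=\{(g_0,U_0-g_0),(g_0,L_0-g_0),(g_0,U_2+g_0),(g_0,L_2+g_0),(U_0-g_2,g_2),(L_0-g_2,g_2),(g_2-U_2,g_2),(g_2-L_2,g_2)\},$$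 $$P^{\mathrm{int}}_y=\{(g_1,U_1-g_1),(g_1,L_1-g_1),(g_1,U_3+g_1),(g_1,L_3+g_1),(U_1-g_3,g_3),(L_1-g_3,g_3),(g_3-U_3,g_3),(g_3-L_3,g_3)\},$$ $P^{gt}_x=\{(g_0,g_2)\}$, $P^{gt}_y=\{(g_1,g_3)\}$, and $P_x=P^c_x\cup P^{\mathrm{int}}_x\cup P^{gt}_x$, $P_y=P^c_y\cup P^{\mathrm{int}}_y\cup P^{gt}_y$. Let $P_{z_0}=\{\alpha:(\alpha,\beta)\in P_x\text{ for some }\beta\}$, $P_{z_2}=\{\beta:(\alpha,\beta)\in P_x\text{ for some }\alpha\}$, $P_{z_1}=\{\alpha:(\alpha,\beta)\in P_y\text{ for some }\beta\}$, $P_{z_3}=\{\beta:(\alpha,\beta)\in P_y\text{ for some }\alpha\}$, and $C_s=P_{z_0}\times P_{z_1}\times P_{z_2}\times P_{z_3}$ (a point $(z_0,z_1,z_2,z_3)$ lies in $C_s$ iff $z_i\in P_{z_i}$ for each $i$). Then the maximum of $\mathrm{IoU}(\mathbf z,g)$ over $F$ is attained at a point of $C_s$: if $\mathbf z^*\in F$ maximises $\mathrm{IoU}(\cdot,g)$ over $F$, then there exists $\mathbf z'\in C_s\cap F$ with $\mathrm{IoU}(\mathbf z',g)=\mathrm{IoU}(\mathbf z^*,g)$.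
   Context: Boxes are in corner format $b=(b_0,b_1,b_2,b_3)$ with top-left corner $(b_0,b_1)$ and bottom-right corner $(b_2,b_3)$. The area of a box is $\mathbf a(b)=(b_3-b_1)(b_2-b_0)$. The intersection of boxes $b,b'$ is $\mathbf i(b,b')=(\max(b_0,b'_0),\max(b_1,b'_1),\min(b_2,b'_2),\min(b_3,b'_3))$, and $\mathrm{IoU}(b,b')=\mathbf a(\mathbf i(b,b'))/\big(\mathbf a(b)+\mathbf a(b')-\mathbf a(\mathbf i(b,b'))\big)$. In the paper's setting the constraint bounds arise from interval bounds on predicted box centres ($z_0+z_2$, $z_1+z_3$ equal twice the centre coordinates) and on predicted widths and heights ($z_2-z_0$, $z_3-z_1$), which are positive. *)

theory Defs
  imports Main Complex_Main
begin

text \<open>Boxes in corner format (b0,b1,b2,b3): top-left (b0,b1), bottom-right (b2,b3).\<close>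
type_synonym box = "real \<times> real \<times> real \<times> real"

definition area :: "box \<Rightarrow> real" where
  "area b = (case b of (b0,b1,b2,b3) \<Rightarrow> (b3 - b1) * (b2 - b0))"

definition inter :: "box \<Rightarrow> box \<Rightarrow> box" where
  "inter b b' = (case b of (b0,b1,b2,b3) \<Rightarrow> case b' of (c0,c1,c2,c3) \<Rightarrow>
     (max b0 c0, max b1 c1, min b2 c2, min b3 c3))"

definition iou :: "box \<Rightarrow> box \<Rightarrow> real" where
  "iou b b' = area (inter b b') / (area b + area b' - area (inter b b'))"

definition feas :: "(nat \<Rightarrow> real) \<Rightarrow> (nat \<Rightarrow> real) \<Rightarrow> box set" where
  "feas L U = {(z0,z1,z2,z3).
      L 0 \<le> z0 + z2 \<and> z0 + z2 \<le> U 0 \<and>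
      L 1 \<le> z1 + z3 \<and> z1 + z3 \<le> U 1 \<and>
      L 2 \<le> z2 - z0 \<and> z2 - z0 \<le> U 2 \<and>
      L 3 \<le> z3 - z1 \<and> z3 - z1 \<le> U 3}"

text \<open>Corner points; a = index of centre bound, b = index of width bound.\<close>
definition Pc :: "(nat \<Rightarrow> real) \<Rightarrow> (nat \<Rightarrow> real) \<Rightarrow> nat \<Rightarrow> nat \<Rightarrow> (real \<times> real) set" where
  "Pc L U a b = {((U a - U b)/2, (U a + U b)/2), ((U a - L b)/2, (U a + L b)/2),
                 ((L a - U b)/2, (L a + U b)/2), ((L a - L b)/2, (L a + L b)/2)}"

definition Pint :: "(nat \<Rightarrow> real) \<Rightarrow> (nat \<Rightarrow> real) \<Rightarrow> nat \<Rightarrow> nat \<Rightarrow> real \<Rightarrow> real \<Rightarrow> (real \<times> real) set" where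
  "Pint L U a b ga gb = {(ga, U a - ga), (ga, L a - ga), (ga, U b + ga), (ga, L b + ga),
                        (U a - gb, gb), (L a - gb, gb), (gb - U b, gb), (gb - L b, gb)}"

definition Px :: "(nat \<Rightarrow> real) \<Rightarrow> (nat \<Rightarrow> real) \<Rightarrow> box \<Rightarrow> (real \<times> real) set" where
  "Px L U g = (case g of (g0,g1,g2,g3) \<Rightarrow> Pc L U 0 2 \<union> Pint L U 0 2 g0 g2 \<union> {(g0, g2)})"

definition Py :: "(nat \<Rightarrow> real) \<Rightarrow> (nat \<Rightarrow> real) \<Rightarrow> box \<Rightarrow> (real \<times> real) set" where
  "Py L U g = (case g of (g0,g1,g2,g3) \<Rightarrow> Pc L U 1 3 \<union> Pint L U 1 3 g1 g3 \<union> {(g1, g3)})"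

definition Cs :: "(nat \<Rightarrow> real) \<Rightarrow> (nat \<Rightarrow> real) \<Rightarrow> box \<Rightarrow> box set" where
  "Cs L U g = {(z0,z1,z2,z3). z0 \<in> fst ` Px L U g \<and> z1 \<in> fst ` Py L U g \<and>
                              z2 \<in> snd ` Px L U g \<and> z3 \<in> snd ` Py L U g}"

end

(* With the y-extent of a box fixed, its IoU with g is N/D, where N is the area of the
   intersection and D = area(box) + area(g) - N. Along a segment in the (z0, z2)-plane on which
   neither z0 - g0 nor z2 - g2 changes sign, the max and min in the intersection are affine, so
   N and D are affine and the IoU is a linear-fractional function of the parameter. Such a
   function has an interior maximum only if an endpoint attains the same value. So a maximiser
   can be slid, without loss of IoU, first along the centre direction and then along the width
   (or along the free edge once an edge is aligned with g) until its x-coordinates form a pair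
   of P_x. Swapping the axes treats the y-coordinates in the same way. *)

theory Submission
  imports Defs
begin

lemma convex_comb_eq_0_imp_eq_0:
  fixes x y s :: real
  assumes "0 < s" "s < 1" "0 \<le> x * y" "(1 - s) * x + s * y = 0"
  shows "x = 0" "y = 0"
proof -
  have neg: "(1 - s) * x = - (s * y)" using assms(4) by linarith
  have "0 \<le> ((1 - s) * s) * (x * y)" using assms by simp
  also have "\<dots> = ((1 - s) * x) * (s * y)" by (simp add: algebra_simps)
  also have "\<dots> = - (s * y)\<^sup>2" by (simp add: neg power2_eq_square)
  finally have "s * y = 0" by simp
  then show "x = 0" "y = 0" using assms by auto
qed

lemma affine_le_0_at_right_end:
  fixes a b :: real
  assumes "\<forall>\<theta>. 0 \<le> \<theta> \<and> \<theta> < 1 \<longrightarrow> (1 - \<theta>) * a + \<theta> * b \<le> 0"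
  shows "b \<le> 0"
proof (rule tendsto_upperbound)
  show "((\<lambda>\<theta>. (1 - \<theta>) * a + \<theta> * b) \<longlongrightarrow> b) (at_left 1)"
    by (auto intro!: tendsto_eq_intros)
  show "\<forall>\<^sub>F \<theta> in at_left 1. (1 - \<theta>) * a + \<theta> * b \<le> 0"
    using eventually_at_left_real[of 0 "1::real"] by (rule eventually_mono) (use assms in auto)
qed simp

(* If D 1 \<le> 0, then D vanishes at some m \<in> (0, 1] where N m > 0,
   and N / D \<rightarrow> \<infinity> as \<mu> \<rightarrow> m from the left. *)
lemma bounded_affine_ratio_denominator_pos:
  fixes N D :: "real \<Rightarrow> real" and M :: real
  assumes N: "\<forall>\<mu>\<in>{0..1}. N \<mu> = (1 - \<mu>) * N 0 + \<mu> * N 1"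
    and D: "\<forall>\<mu>\<in>{0..1}. D \<mu> = (1 - \<mu>) * D 0 + \<mu> * D 1"
    and bound: "\<forall>\<mu>\<in>{0..1}. N \<mu> / D \<mu> \<le> M"
    and pole: "\<forall>\<mu>\<in>{0..1}. D \<mu> = 0 \<longrightarrow> 0 < N \<mu>"
    and "0 < D 0"
  shows "0 < D 1"
proof (rule ccontr)
  assume "\<not> 0 < D 1"
  define m where "m = D 0 / (D 0 - D 1)"
  have m: "m \<in> {0..1}" "0 < m" unfolding m_def using \<open>0 < D 0\<close> \<open>\<not> 0 < D 1\<close> by auto
  have "D m = (1 - m) * D 0 + m * D 1" using D m by blast
  also have "\<dots> = 0" using \<open>0 < D 0\<close> \<open>\<not> 0 < D 1\<close> unfolding m_def by (simp add: field_simps)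
  finally have "D m = 0" .
  have "N m \<le> 0"
  proof (rule affine_le_0_at_right_end[of "N 0 - M * D 0"], intro allI impI)
    fix \<theta> :: real assume \<theta>: "0 \<le> \<theta> \<and> \<theta> < 1"
    then have \<theta>m: "\<theta> * m \<in> {0..1}" using m by (simp add: mult_le_one)
    have along: "X (\<theta> * m) = (1 - \<theta>) * X 0 + \<theta> * X m"
      if "\<forall>\<mu>\<in>{0..1}. X \<mu> = (1 - \<mu>) * X 0 + \<mu> * X 1" for X :: "real \<Rightarrow> real"
      unfolding that[rule_format, OF \<theta>m] that[rule_format, OF m(1)] by (simp add: algebra_simps)
    have "0 < D (\<theta> * m)" using along[OF D] \<open>D m = 0\<close> \<open>0 < D 0\<close> \<theta> by simp
    moreover have "N (\<theta> * m) / D (\<theta> * m) \<le> M" using bound \<theta>m by blast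
    ultimately have "N (\<theta> * m) \<le> M * D (\<theta> * m)" by (simp add: pos_divide_le_eq)
    then show "(1 - \<theta>) * (N 0 - M * D 0) + \<theta> * N m \<le> 0"
      using along[OF N] along[OF D] \<open>D m = 0\<close> by (simp add: algebra_simps)
  qed
  moreover have "0 < N m" using pole \<open>D m = 0\<close> m by simp
  ultimately show False by simp
qed

lemma bounded_affine_ratio_denominator_sign:
  fixes N D :: "real \<Rightarrow> real" and M :: real
  assumes N: "\<forall>\<mu>\<in>{0..1}. N \<mu> = (1 - \<mu>) * N 0 + \<mu> * N 1"
    and D: "\<forall>\<mu>\<in>{0..1}. D \<mu> = (1 - \<mu>) * D 0 + \<mu> * D 1"
    and bound: "\<forall>\<mu>\<in>{0..1}. N \<mu> / D \<mu> \<le> M"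
    and pole: "\<forall>\<mu>\<in>{0..1}. D \<mu> = 0 \<longrightarrow> 0 < N \<mu>"
  shows "0 < D 0 \<longleftrightarrow> 0 < D 1"
proof
  show "0 < D 0 \<Longrightarrow> 0 < D 1"
    using bounded_affine_ratio_denominator_pos[OF N D bound pole] by blast
next
  have reflect: "\<forall>\<mu>\<in>{0..1}. P (1 - \<mu>)" if "\<forall>\<mu>\<in>{0..1}. P \<mu>" for P :: "real \<Rightarrow> bool"
  proof
    fix \<mu> :: real assume "\<mu> \<in> {0..1}"
    then have "1 - \<mu> \<in> {0..1}" by simp
    with that show "P (1 - \<mu>)" by blast
  qed
  have "\<forall>\<mu>\<in>{0..1}. N (1 - \<mu>) = (1 - \<mu>) * N 1 + \<mu> * N 0"
    "\<forall>\<mu>\<in>{0..1}. D (1 - \<mu>) = (1 - \<mu>) * D 1 + \<mu> * D 0"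
    using reflect[OF N] reflect[OF D] by (simp_all add: algebra_simps)
  then show "0 < D 1 \<Longrightarrow> 0 < D 0"
    using bounded_affine_ratio_denominator_pos[of "\<lambda>\<mu>. N (1 - \<mu>)" "\<lambda>\<mu>. D (1 - \<mu>)"]
      reflect[OF bound] reflect[OF pole] by simp
qed

(* As D 0 and D 1 have the same sign, the affine function e = N - M * D has one sign on [0, 1]
   (e \<le> 0 where D > 0, e \<ge> 0 where D \<le> 0). Unless D s = 0 it vanishes at the interior
   maximiser s, hence at an endpoint as well. *)
lemma affine_ratio_max_at_endpoint:
  fixes N D :: "real \<Rightarrow> real" and s :: real
  assumes N: "\<forall>\<mu>\<in>{0..1}. N \<mu> = (1 - \<mu>) * N 0 + \<mu> * N 1"
    and D: "\<forall>\<mu>\<in>{0..1}. D \<mu> = (1 - \<mu>) * D 0 + \<mu> * D 1"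
    and s: "s \<in> {0..1}"
    and max: "\<forall>\<mu>\<in>{0..1}. N \<mu> / D \<mu> \<le> N s / D s"
    and pole: "\<forall>\<mu>\<in>{0..1}. D \<mu> = 0 \<longrightarrow> 0 < N \<mu>"
  shows "N 0 / D 0 = N s / D s \<or> N 1 / D 1 = N s / D s"
proof -
  define M where "M = N s / D s"
  define e where "e \<mu> = N \<mu> - M * D \<mu>" for \<mu>
  have D_sign: "0 < D 0 \<longleftrightarrow> 0 < D 1"
    by (rule bounded_affine_ratio_denominator_sign[OF N D max pole])
  have e_sign: "0 < D \<mu> \<Longrightarrow> e \<mu> \<le> 0" "D \<mu> \<le> 0 \<Longrightarrow> 0 \<le> e \<mu>" if "\<mu> \<in> {0..1}" for \<mu>
  proof -
    have "N \<mu> / D \<mu> \<le> M" using max that unfolding M_def by blast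
    then show "0 < D \<mu> \<Longrightarrow> e \<mu> \<le> 0" unfolding e_def by (simp add: pos_divide_le_eq)
    show "0 \<le> e \<mu>" if "D \<mu> \<le> 0"
    proof (cases "D \<mu> = 0")
      case True
      then show ?thesis using pole \<open>\<mu> \<in> {0..1}\<close> unfolding e_def by force
    next
      case False
      with that \<open>N \<mu> / D \<mu> \<le> M\<close> show ?thesis unfolding e_def by (simp add: neg_divide_le_eq)
    qed
  qed
  consider "s = 0" | "s = 1" | "0 < s" "s < 1" using s by fastforce
  then show ?thesis
  proof cases
    case 3
    show ?thesis
    proof (cases "D s = 0")
      case True
      have "0 \<le> D 0 * D 1" using D_sign by (auto simp: zero_le_mult_iff)
      then have "D 0 = 0" using convex_comb_eq_0_imp_eq_0(1)[OF 3] D[rule_format, OF s] True by simp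
      then show ?thesis using True by simp
    next
      case False
      have "0 \<le> e 0 * e 1" using e_sign[of 0] e_sign[of 1] D_sign
        by (cases "0 < D 0") (auto simp: zero_le_mult_iff)
      moreover have "(1 - s) * e 0 + s * e 1 = e s"
        unfolding e_def N[rule_format, OF s] D[rule_format, OF s] by (simp add: algebra_simps)
      moreover have "e s = 0" using False unfolding e_def M_def by simp
      ultimately have "e 0 = 0" using convex_comb_eq_0_imp_eq_0(1)[OF 3] by simp
      moreover from this have "D 0 \<noteq> 0" using pole unfolding e_def by force
      ultimately show ?thesis unfolding e_def M_def by (simp add: field_simps)
    qed
  qed simp_all
qed

lemma affine_crossing:
  fixes p q c l r :: real
  assumes "l \<le> r" "(p + q * l - c) * (p + q * r - c) < 0"
  obtains u where "l < u" "u < r" "q \<noteq> 0" "p + q * u = c"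
proof -
  have "q \<noteq> 0" using assms(2) by auto
  define u where "u = (c - p) / q"
  have shift: "p + q * x - c = q * (x - u)" for x
    using \<open>q \<noteq> 0\<close> unfolding u_def by (simp add: field_simps)
  have "0 < q\<^sup>2" using \<open>q \<noteq> 0\<close> by simp
  moreover have "q\<^sup>2 * ((l - u) * (r - u)) < 0"
    using assms(2) unfolding shift by (simp add: power2_eq_square algebra_simps)
  ultimately have "(l - u) * (r - u) < 0" by (simp add: mult_less_0_iff)
  then have "l < u" "u < r" using assms(1) by (auto simp: mult_less_0_iff)
  moreover have "p + q * u = c" using shift[of u] by simp
  ultimately show thesis using that \<open>q \<noteq> 0\<close> by blast
qed

lemma max_convex_comb:
  fixes x y c \<mu> :: real
  assumes "\<mu> \<in> {0..1}" and "0 \<le> (x - c) * (y - c)"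
  shows "max ((1 - \<mu>) * x + \<mu> * y) c = (1 - \<mu>) * max x c + \<mu> * max y c"
proof -
  have comb: "(1 - \<mu>) * x + \<mu> * y - c = (1 - \<mu>) * (x - c) + \<mu> * (y - c)"
    by (simp add: algebra_simps)
  from assms(2) consider "c \<le> x" "c \<le> y" | "x \<le> c" "y \<le> c"
    by (auto simp: zero_le_mult_iff)
  then show ?thesis
  proof cases
    case 1
    then have "0 \<le> (1 - \<mu>) * (x - c) + \<mu> * (y - c)" using assms(1) by simp
    with 1 comb show ?thesis by simp
  next
    case 2
    then have "(1 - \<mu>) * (x - c) + \<mu> * (y - c) \<le> 0"
      using assms(1) by (simp add: add_nonpos_nonpos mult_nonneg_nonpos)
    with 2 comb show ?thesis by (simp add: algebra_simps)
  qed
qed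

lemma min_convex_comb:
  fixes x y c \<mu> :: real
  assumes "\<mu> \<in> {0..1}" and "0 \<le> (x - c) * (y - c)"
  shows "min ((1 - \<mu>) * x + \<mu> * y) c = (1 - \<mu>) * min x c + \<mu> * min y c"
proof -
  have min_eq: "min a c = a + c - max a c" for a :: real by (simp add: min_def max_def)
  show ?thesis unfolding min_eq max_convex_comb[OF assms] by (simp add: algebra_simps)
qed

lemma area_x_convex_comb:
  "area ((1 - \<mu>) * x0 + \<mu> * x0', y1, (1 - \<mu>) * x2 + \<mu> * x2', y3) =
     (1 - \<mu>) * area (x0, y1, x2, y3) + \<mu> * area (x0', y1, x2', y3)"
  unfolding area_def by (simp add: algebra_simps)

lemma area_inter_x_convex_comb:
  assumes "\<mu> \<in> {0..1}" "0 \<le> (x0 - g0) * (x0' - g0)" "0 \<le> (x2 - g2) * (x2' - g2)"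
  shows "area (inter ((1 - \<mu>) * x0 + \<mu> * x0', y1, (1 - \<mu>) * x2 + \<mu> * x2', y3) (g0, g1, g2, g3)) =
     (1 - \<mu>) * area (inter (x0, y1, x2, y3) (g0, g1, g2, g3)) +
     \<mu> * area (inter (x0', y1, x2', y3) (g0, g1, g2, g3))"
proof -
  have I: "inter ((1 - \<mu>) * x0 + \<mu> * x0', y1, (1 - \<mu>) * x2 + \<mu> * x2', y3) (g0, g1, g2, g3) =
      ((1 - \<mu>) * max x0 g0 + \<mu> * max x0' g0, max y1 g1, (1 - \<mu>) * min x2 g2 + \<mu> * min x2' g2, min y3 g3)"
    unfolding inter_def by (simp add: max_convex_comb[OF assms(1,2)] min_convex_comb[OF assms(1,3)])
  show ?thesis unfolding I by (simp add: area_def inter_def algebra_simps)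
qed

lemma iou_x_segment_max_at_endpoint:
  fixes x0 x2 x0' x2' y1 y3 s :: real
  defines "seg \<mu> \<equiv> ((1 - \<mu>) * x0 + \<mu> * x0', y1, (1 - \<mu>) * x2 + \<mu> * x2', y3)"
  assumes g: "0 < area (g0, g1, g2, g3)"
    and area: "0 \<le> area (x0, y1, x2, y3)" "0 \<le> area (x0', y1, x2', y3)"
    and side: "0 \<le> (x0 - g0) * (x0' - g0)" "0 \<le> (x2 - g2) * (x2' - g2)"
    and s: "s \<in> {0..1}"
    and max: "\<forall>\<mu>\<in>{0..1}. iou (seg \<mu>) (g0, g1, g2, g3) \<le> iou (seg s) (g0, g1, g2, g3)"
  shows "iou (x0, y1, x2, y3) (g0, g1, g2, g3) = iou (seg s) (g0, g1, g2, g3) \<or>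
    iou (x0', y1, x2', y3) (g0, g1, g2, g3) = iou (seg s) (g0, g1, g2, g3)"
proof -
  define N where "N \<mu> = area (inter (seg \<mu>) (g0, g1, g2, g3))" for \<mu>
  define D where "D \<mu> = area (seg \<mu>) + area (g0, g1, g2, g3) - N \<mu>" for \<mu>
  have seg01: "seg 0 = (x0, y1, x2, y3)" "seg 1 = (x0', y1, x2', y3)" unfolding seg_def by simp_all
  have iou_seg: "iou (seg \<mu>) (g0, g1, g2, g3) = N \<mu> / D \<mu>" for \<mu>
    unfolding iou_def N_def D_def ..
  have area_seg: "area (seg \<mu>) = (1 - \<mu>) * area (x0, y1, x2, y3) + \<mu> * area (x0', y1, x2', y3)" for \<mu>
    unfolding seg_def by (rule area_x_convex_comb)
  have N: "\<forall>\<mu>\<in>{0..1}. N \<mu> = (1 - \<mu>) * N 0 + \<mu> * N 1"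
    unfolding N_def seg01 unfolding seg_def using area_inter_x_convex_comb[OF _ side] by blast
  have D: "\<forall>\<mu>\<in>{0..1}. D \<mu> = (1 - \<mu>) * D 0 + \<mu> * D 1"
    using N unfolding D_def area_seg by (simp add: algebra_simps)
  txt \<open>inter is not clamped at zero: for a box separated from g in both directions N > 0 and D
    may vanish or be negative. All that survives is N > 0 wherever D = 0.\<close>
  have pole: "\<forall>\<mu>\<in>{0..1}. D \<mu> = 0 \<longrightarrow> 0 < N \<mu>"
  proof (intro ballI impI)
    fix \<mu> :: real assume "\<mu> \<in> {0..1}" "D \<mu> = 0"
    have "0 \<le> area (seg \<mu>)" unfolding area_seg using \<open>\<mu> \<in> {0..1}\<close> area by simp
    then show "0 < N \<mu>" using \<open>D \<mu> = 0\<close> g unfolding D_def by linarith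
  qed
  from affine_ratio_max_at_endpoint[OF N D s _ pole] max show ?thesis
    unfolding iou_seg seg01[symmetric] by blast
qed

lemma iou_line_max_at_piece_endpoint:
  fixes p0 q0 p2 q2 y1 y3 l r t :: real
  defines "z u \<equiv> (p0 + q0 * u, y1, p2 + q2 * u, y3)"
  assumes g: "0 < area (g0, g1, g2, g3)"
    and area: "0 \<le> area (z l)" "0 \<le> area (z r)"
    and side: "0 \<le> (p0 + q0 * l - g0) * (p0 + q0 * r - g0)" "0 \<le> (p2 + q2 * l - g2) * (p2 + q2 * r - g2)"
    and t: "t \<in> {l..r}"
    and max: "\<forall>u\<in>{l..r}. iou (z u) (g0, g1, g2, g3) \<le> iou (z t) (g0, g1, g2, g3)"
  shows "iou (z l) (g0, g1, g2, g3) = iou (z t) (g0, g1, g2, g3) \<or>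
    iou (z r) (g0, g1, g2, g3) = iou (z t) (g0, g1, g2, g3)"
proof (cases "l = r")
  case True
  then show ?thesis using t by simp
next
  case False
  then have "l < r" using t by simp
  have comb: "(1 - \<mu>) * l + \<mu> * r = l + \<mu> * (r - l)" for \<mu> by (simp add: algebra_simps)
  define s where "s = (t - l) / (r - l)"
  have s: "s \<in> {0..1}" unfolding s_def using t \<open>l < r\<close> by (simp add: field_simps)
  have "s * (r - l) = t - l" unfolding s_def using \<open>l < r\<close> by simp
  then have s_t: "(1 - s) * l + s * r = t" unfolding comb by simp
  have seg: "((1 - \<mu>) * (p0 + q0 * l) + \<mu> * (p0 + q0 * r), y1,
      (1 - \<mu>) * (p2 + q2 * l) + \<mu> * (p2 + q2 * r), y3) = z ((1 - \<mu>) * l + \<mu> * r)" for \<mu>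
    unfolding z_def by (simp add: algebra_simps)
  have "(1 - \<mu>) * l + \<mu> * r \<in> {l..r}" if "\<mu> \<in> {0..1}" for \<mu>
  proof -
    have "0 \<le> \<mu> * (r - l)" "\<mu> * (r - l) \<le> r - l"
      using that \<open>l < r\<close> mult_right_mono[of \<mu> 1 "r - l"] by simp_all
    then show ?thesis unfolding comb by simp
  qed
  with max have "\<forall>\<mu>\<in>{0..1}.
      iou (z ((1 - \<mu>) * l + \<mu> * r)) (g0, g1, g2, g3) \<le> iou (z t) (g0, g1, g2, g3)"
    by blast
  with iou_x_segment_max_at_endpoint[of g0 g1 g2 g3 "p0 + q0 * l" y1 "p2 + q2 * l" y3
      "p0 + q0 * r" "p2 + q2 * r" s] g area side s
  show ?thesis unfolding seg s_t z_def by simp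
qed

lemma finite_set_bracket:
  fixes S :: "'a :: linorder set"
  assumes "finite S" "a \<in> S" "b \<in> S" "a \<le> t" "t \<le> b"
  obtains l r where "l \<in> S" "r \<in> S" "l \<le> t" "t \<le> r" "\<forall>u\<in>S. u \<le> l \<or> r \<le> u"
proof
  let ?S\<^sub>l = "{u \<in> S. u \<le> t}" and ?S\<^sub>r = "{u \<in> S. t \<le> u}"
  have fin: "finite ?S\<^sub>l" "finite ?S\<^sub>r" using assms(1) by simp_all
  have "Max ?S\<^sub>l \<in> ?S\<^sub>l" "Min ?S\<^sub>r \<in> ?S\<^sub>r"
    using assms by (intro Max_in Min_in fin; auto)+
  then show "Max ?S\<^sub>l \<in> S" "Min ?S\<^sub>r \<in> S" "Max ?S\<^sub>l \<le> t" "t \<le> Min ?S\<^sub>r" by simp_all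
  show "\<forall>u\<in>S. u \<le> Max ?S\<^sub>l \<or> Min ?S\<^sub>r \<le> u"
    using Max_ge[OF fin(1)] Min_le[OF fin(2)] by (metis (mono_tags) linear mem_Collect_eq)
qed

abbreviation iou_argmax :: "(nat \<Rightarrow> real) \<Rightarrow> (nat \<Rightarrow> real) \<Rightarrow> box \<Rightarrow> box \<Rightarrow> bool" where
  "iou_argmax L U g \<equiv> is_arg_max (\<lambda>z. iou z g) (\<lambda>z. z \<in> feas L U)"

lemma feas_area_nonneg:
  assumes "z \<in> feas L U" "0 \<le> L 2" "0 \<le> L 3"
  shows "0 \<le> area z"
  using assms unfolding feas_def area_def by auto

lemma iou_argmax_on_line_moves_to_breakpoint:
  fixes p0 q0 p2 q2 y1 y3 a b t :: real
  defines "z u \<equiv> (p0 + q0 * u, y1, p2 + q2 * u, y3)"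
  assumes g: "g0 < g2" "g1 < g3" and L: "0 \<le> L 2" "0 \<le> L 3"
    and line: "\<forall>u\<in>{a..b}. z u \<in> feas L U" and t: "t \<in> {a..b}"
    and max: "iou_argmax L U (g0, g1, g2, g3) (z t)"
  obtains u where "u \<in> {a..b}"
    "u = a \<or> u = b \<or> q0 \<noteq> 0 \<and> p0 + q0 * u = g0 \<or> q2 \<noteq> 0 \<and> p2 + q2 * u = g2"
    "iou_argmax L U (g0, g1, g2, g3) (z u)"
proof -
  let ?g = "(g0, g1, g2, g3)"
  define B where "B = {u. q0 \<noteq> 0 \<and> p0 + q0 * u = g0 \<or> q2 \<noteq> 0 \<and> p2 + q2 * u = g2}"
  have "B \<subseteq> {(g0 - p0) / q0, (g2 - p2) / q2}" unfolding B_def by (auto simp: field_simps)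
  then have "finite B" by (rule finite_subset) simp
  define S where "S = {a, b} \<union> (B \<inter> {a..b})"
  txt \<open>No breakpoint lies strictly between l and r, so on [l, r] no x-edge of the box crosses the
    matching edge of g.\<close>
  obtain l r where lr: "l \<in> S" "r \<in> S" and "l \<le> t" "t \<le> r" and gap: "\<forall>u\<in>S. u \<le> l \<or> r \<le> u"
    using finite_set_bracket[of S a b t] \<open>finite B\<close> t unfolding S_def by auto
  have S_sub: "S \<subseteq> {a..b}" using t unfolding S_def by auto
  then have lr_in: "l \<in> {a..b}" "r \<in> {a..b}" using lr by auto
  then have lr_ab: "{l..r} \<subseteq> {a..b}" by auto
  have side: "0 \<le> (p + q * l - c) * (p + q * r - c)"
    if "\<And>u. q \<noteq> 0 \<Longrightarrow> p + q * u = c \<Longrightarrow> u \<in> B" for p q c :: real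
  proof (rule ccontr)
    assume "\<not> 0 \<le> (p + q * l - c) * (p + q * r - c)"
    then have "(p + q * l - c) * (p + q * r - c) < 0" by linarith
    with \<open>l \<le> t\<close> \<open>t \<le> r\<close> obtain u where u: "l < u" "u < r" "q \<noteq> 0" "p + q * u = c"
      using affine_crossing[of l r p q c] by auto
    with lr_ab that[OF u(3,4)] have "u \<in> S" unfolding S_def by auto
    with gap have "u \<le> l \<or> r \<le> u" by blast
    with u show False by linarith
  qed
  have "iou (z l) ?g = iou (z t) ?g \<or> iou (z r) ?g = iou (z t) ?g"
  proof (rule iou_line_max_at_piece_endpoint
      [where ?p0.0 = p0 and ?q0.0 = q0 and ?p2.0 = p2 and ?q2.0 = q2 and ?y1.0 = y1 and ?y3.0 = y3,
       folded z_def])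
    show "0 < area ?g" using g unfolding area_def by simp
    show "0 \<le> area (z l)" "0 \<le> area (z r)"
      using feas_area_nonneg[OF line[rule_format] L] lr_in by blast+
    show "0 \<le> (p0 + q0 * l - g0) * (p0 + q0 * r - g0)" "0 \<le> (p2 + q2 * l - g2) * (p2 + q2 * r - g2)"
      by (rule side; simp add: B_def)+
    show "t \<in> {l..r}" using \<open>l \<le> t\<close> \<open>t \<le> r\<close> by simp
    show "\<forall>u\<in>{l..r}. iou (z u) ?g \<le> iou (z t) ?g"
      using max line lr_ab unfolding is_arg_max_linorder by blast
  qed
  moreover have "iou_argmax L U ?g (z u)" if "u \<in> S" "iou (z u) ?g = iou (z t) ?g" for u
    using that max line S_sub unfolding is_arg_max_linorder by auto
  moreover have "u \<in> {a..b}"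
    "u = a \<or> u = b \<or> q0 \<noteq> 0 \<and> p0 + q0 * u = g0 \<or> q2 \<noteq> 0 \<and> p2 + q2 * u = g2" if "u \<in> S" for u
    using that S_sub unfolding S_def B_def by auto
  ultimately show ?thesis using that lr by blast
qed

lemma Pc_Pint_subset_Px:
  "Pc L U 0 2 \<subseteq> Px L U (g0, g1, g2, g3)" "Pint L U 0 2 g0 g2 \<subseteq> Px L U (g0, g1, g2, g3)"
  "(g0, g2) \<in> Px L U (g0, g1, g2, g3)"
  unfolding Px_def by auto

lemma iou_argmax_x_center_extreme_or_aligned:
  assumes g: "g0 < g2" "g1 < g3" and L: "0 \<le> L 2" "0 \<le> L 3"
    and max: "iou_argmax L U (g0, g1, g2, g3) (z0, z1, z2, z3)"
  obtains x0 x2 where "iou_argmax L U (g0, g1, g2, g3) (x0, z1, x2, z3)"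
    "x0 + x2 = L 0 \<or> x0 + x2 = U 0 \<or> x0 = g0 \<or> x2 = g2"
proof -
  define w where "w = z2 - z0"
  have "(z0, z1, z2, z3) \<in> feas L U" using max unfolding is_arg_max_def by simp
  then have line: "\<forall>u\<in>{L 0..U 0}. (- w / 2 + 1 / 2 * u, z1, w / 2 + 1 / 2 * u, z3) \<in> feas L U"
    and t: "z0 + z2 \<in> {L 0..U 0}"
    unfolding feas_def w_def by (auto simp: field_simps)
  have "(- w / 2 + 1 / 2 * (z0 + z2), z1, w / 2 + 1 / 2 * (z0 + z2), z3) = (z0, z1, z2, z3)"
    unfolding w_def by (simp add: field_simps)
  with max have "iou_argmax L U (g0, g1, g2, g3) (- w / 2 + 1 / 2 * (z0 + z2), z1, w / 2 + 1 / 2 * (z0 + z2), z3)"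
    by simp
  from iou_argmax_on_line_moves_to_breakpoint[OF g L line t this]
  obtain u where "u = L 0 \<or> u = U 0 \<or> - w / 2 + 1 / 2 * u = g0 \<or> w / 2 + 1 / 2 * u = g2"
    "iou_argmax L U (g0, g1, g2, g3) (- w / 2 + 1 / 2 * u, z1, w / 2 + 1 / 2 * u, z3)"
    by auto
  then show thesis using that by (auto simp: field_simps)
qed

lemma iou_argmax_x_in_Px_if_center_extreme:
  assumes g: "g0 < g2" "g1 < g3" and L: "0 \<le> L 2" "0 \<le> L 3"
    and max: "iou_argmax L U (g0, g1, g2, g3) (z0, z1, z2, z3)"
    and extreme: "z0 + z2 = L 0 \<or> z0 + z2 = U 0"
  obtains x0 x2 where "(x0, x2) \<in> Px L U (g0, g1, g2, g3)" "iou_argmax L U (g0, g1, g2, g3) (x0, z1, x2, z3)"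
proof -
  define c where "c = z0 + z2"
  have c: "c = L 0 \<or> c = U 0" using extreme unfolding c_def .
  have "(z0, z1, z2, z3) \<in> feas L U" using max unfolding is_arg_max_def by simp
  then have line: "\<forall>u\<in>{L 2..U 2}. (c / 2 + - 1 / 2 * u, z1, c / 2 + 1 / 2 * u, z3) \<in> feas L U"
    and t: "z2 - z0 \<in> {L 2..U 2}"
    unfolding feas_def c_def by auto
  have "(c / 2 + - 1 / 2 * (z2 - z0), z1, c / 2 + 1 / 2 * (z2 - z0), z3) = (z0, z1, z2, z3)"
    unfolding c_def by (simp add: field_simps)
  with max have "iou_argmax L U (g0, g1, g2, g3) (c / 2 + - 1 / 2 * (z2 - z0), z1, c / 2 + 1 / 2 * (z2 - z0), z3)"
    by simp
  from iou_argmax_on_line_moves_to_breakpoint[OF g L line t this]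
  obtain u where u: "u = L 2 \<or> u = U 2 \<or> c / 2 + - 1 / 2 * u = g0 \<or> c / 2 + 1 / 2 * u = g2"
    and "iou_argmax L U (g0, g1, g2, g3) (c / 2 + - 1 / 2 * u, z1, c / 2 + 1 / 2 * u, z3)"
    by auto
  moreover have "(c / 2 + - 1 / 2 * u, c / 2 + 1 / 2 * u) \<in> Px L U (g0, g1, g2, g3)"
  proof -
    have x: "c / 2 + - 1 / 2 * u = (c - u) / 2" "c / 2 + 1 / 2 * u = (c + u) / 2" by simp_all
    from u consider "u = L 2 \<or> u = U 2" | "(c - u) / 2 = g0" | "(c + u) / 2 = g2" unfolding x by blast
    then have "((c - u) / 2, (c + u) / 2) \<in> Px L U (g0, g1, g2, g3)"
    proof cases
      case 1
      with c have "((c - u) / 2, (c + u) / 2) \<in> Pc L U 0 2" unfolding Pc_def by (elim disjE) simp_all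
      then show ?thesis using Pc_Pint_subset_Px by blast
    next
      case 2
      then have "(c + u) / 2 = c - g0" by simp
      with c have "(g0, (c + u) / 2) \<in> Pint L U 0 2 g0 g2" unfolding Pint_def by (elim disjE) simp_all
      then show ?thesis unfolding 2 using Pc_Pint_subset_Px by blast
    next
      case 3
      then have "(c - u) / 2 = c - g2" by simp
      with c have "((c - u) / 2, g2) \<in> Pint L U 0 2 g0 g2" unfolding Pint_def by (elim disjE) simp_all
      then show ?thesis unfolding 3 using Pc_Pint_subset_Px by blast
    qed
    then show ?thesis unfolding x .
  qed
  ultimately show thesis using that by blast
qed

lemma iou_argmax_x_in_Px_if_left_aligned:
  assumes g: "g0 < g2" "g1 < g3" and L: "0 \<le> L 2" "0 \<le> L 3"
    and max: "iou_argmax L U (g0, g1, g2, g3) (g0, z1, z2, z3)"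
  obtains x0 x2 where "(x0, x2) \<in> Px L U (g0, g1, g2, g3)" "iou_argmax L U (g0, g1, g2, g3) (x0, z1, x2, z3)"
proof -
  define lo where "lo = max (L 0 - g0) (L 2 + g0)"
  define hi where "hi = min (U 0 - g0) (U 2 + g0)"
  have "(g0, z1, z2, z3) \<in> feas L U" using max unfolding is_arg_max_def by simp
  then have line: "\<forall>u\<in>{lo..hi}. (g0 + 0 * u, z1, 0 + 1 * u, z3) \<in> feas L U"
    and t: "z2 \<in> {lo..hi}"
    unfolding feas_def lo_def hi_def by auto
  from max have "iou_argmax L U (g0, g1, g2, g3) (g0 + 0 * z2, z1, 0 + 1 * z2, z3)" by simp
  from iou_argmax_on_line_moves_to_breakpoint[OF g L line t this]
  obtain u where u: "u = lo \<or> u = hi \<or> u = g2" and "iou_argmax L U (g0, g1, g2, g3) (g0, z1, u, z3)"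
    by auto
  moreover have "u \<in> {L 0 - g0, L 2 + g0, U 0 - g0, U 2 + g0, g2}"
    using u unfolding lo_def hi_def max_def min_def by (auto split: if_splits)
  then have "(g0, u) \<in> Px L U (g0, g1, g2, g3)" unfolding Px_def Pint_def by auto
  ultimately show thesis using that by blast
qed

lemma iou_argmax_x_in_Px_if_right_aligned:
  assumes g: "g0 < g2" "g1 < g3" and L: "0 \<le> L 2" "0 \<le> L 3"
    and max: "iou_argmax L U (g0, g1, g2, g3) (z0, z1, g2, z3)"
  obtains x0 x2 where "(x0, x2) \<in> Px L U (g0, g1, g2, g3)" "iou_argmax L U (g0, g1, g2, g3) (x0, z1, x2, z3)"
proof -
  define lo where "lo = max (L 0 - g2) (g2 - U 2)"
  define hi where "hi = min (U 0 - g2) (g2 - L 2)"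
  have "(z0, z1, g2, z3) \<in> feas L U" using max unfolding is_arg_max_def by simp
  then have line: "\<forall>u\<in>{lo..hi}. (0 + 1 * u, z1, g2 + 0 * u, z3) \<in> feas L U"
    and t: "z0 \<in> {lo..hi}"
    unfolding feas_def lo_def hi_def by auto
  from max have "iou_argmax L U (g0, g1, g2, g3) (0 + 1 * z0, z1, g2 + 0 * z0, z3)" by simp
  from iou_argmax_on_line_moves_to_breakpoint[OF g L line t this]
  obtain u where u: "u = lo \<or> u = hi \<or> u = g0" and "iou_argmax L U (g0, g1, g2, g3) (u, z1, g2, z3)"
    by auto
  moreover have "u \<in> {L 0 - g2, g2 - U 2, U 0 - g2, g2 - L 2, g0}"
    using u unfolding lo_def hi_def max_def min_def by (auto split: if_splits)
  then have "(u, g2) \<in> Px L U (g0, g1, g2, g3)" unfolding Px_def Pint_def by auto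
  ultimately show thesis using that by blast
qed

lemma iou_argmax_x_in_Px:
  assumes g: "g0 < g2" "g1 < g3" and L: "0 \<le> L 2" "0 \<le> L 3"
    and max: "iou_argmax L U (g0, g1, g2, g3) (z0, z1, z2, z3)"
  obtains x0 x2 where "(x0, x2) \<in> Px L U (g0, g1, g2, g3)" "iou_argmax L U (g0, g1, g2, g3) (x0, z1, x2, z3)"
proof -
  obtain y0 y2 where y: "iou_argmax L U (g0, g1, g2, g3) (y0, z1, y2, z3)"
    and "y0 + y2 = L 0 \<or> y0 + y2 = U 0 \<or> y0 = g0 \<or> y2 = g2"
    using iou_argmax_x_center_extreme_or_aligned[OF g L max] .
  then consider "y0 + y2 = L 0 \<or> y0 + y2 = U 0" | "y0 = g0" | "y2 = g2" by blast
  then show thesis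
  proof cases
    case 1
    from iou_argmax_x_in_Px_if_center_extreme[OF g L y this] that show thesis by blast
  next
    case 2
    from iou_argmax_x_in_Px_if_left_aligned[OF g L y[unfolded 2]] that show thesis by blast
  next
    case 3
    from iou_argmax_x_in_Px_if_right_aligned[OF g L y[unfolded 3]] that show thesis by blast
  qed
qed

definition swap_xy :: "nat \<Rightarrow> nat" where
  "swap_xy i = (if i = 0 then 1 else if i = 1 then 0 else if i = 2 then 3 else if i = 3 then 2 else i)"

definition transpose_box :: "box \<Rightarrow> box" where
  "transpose_box = (\<lambda>(b0, b1, b2, b3). (b1, b0, b3, b2))"

lemma transpose_box_simp [simp]: "transpose_box (b0, b1, b2, b3) = (b1, b0, b3, b2)"
  unfolding transpose_box_def by simp

lemma swap_xy_swap_xy [simp]: "f \<circ> swap_xy \<circ> swap_xy = f"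
  by (rule ext) (simp add: swap_xy_def)

lemma feas_transpose_box:
  "transpose_box z \<in> feas (L \<circ> swap_xy) (U \<circ> swap_xy) \<longleftrightarrow> z \<in> feas L U"
  by (cases z) (auto simp: feas_def swap_xy_def)

lemma iou_transpose_box: "iou (transpose_box z) (transpose_box g) = iou z g"
  by (cases z, cases g) (simp add: iou_def area_def inter_def mult.commute)

lemma Px_transpose_box: "Px (L \<circ> swap_xy) (U \<circ> swap_xy) (transpose_box g) = Py L U g"
  by (cases g) (simp add: Px_def Py_def Pc_def Pint_def swap_xy_def)

lemma iou_argmax_transpose_box:
  assumes "iou_argmax L U g z"
  shows "iou_argmax (L \<circ> swap_xy) (U \<circ> swap_xy) (transpose_box g) (transpose_box z)"
proof -
  have "transpose_box (transpose_box y) = y" for y by (cases y) simp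
  then show ?thesis using assms unfolding is_arg_max_linorder
    by (metis feas_transpose_box iou_transpose_box)
qed

lemma iou_argmax_y_in_Py:
  assumes g: "g0 < g2" "g1 < g3" and L: "0 \<le> L 2" "0 \<le> L 3"
    and max: "iou_argmax L U (g0, g1, g2, g3) (x0, z1, x2, z3)"
  obtains y1 y3 where "(y1, y3) \<in> Py L U (g0, g1, g2, g3)" "iou_argmax L U (g0, g1, g2, g3) (x0, y1, x2, y3)"
proof -
  have L': "0 \<le> (L \<circ> swap_xy) 2" "0 \<le> (L \<circ> swap_xy) 3" using L by (simp_all add: swap_xy_def)
  from iou_argmax_transpose_box[OF max]
  have "iou_argmax (L \<circ> swap_xy) (U \<circ> swap_xy) (g1, g0, g3, g2) (z1, x0, z3, x2)" by simp
  from iou_argmax_x_in_Px[OF g(2,1) L' this] obtain y1 y3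
    where "(y1, y3) \<in> Px (L \<circ> swap_xy) (U \<circ> swap_xy) (transpose_box (g0, g1, g2, g3))"
      and "iou_argmax (L \<circ> swap_xy) (U \<circ> swap_xy) (g1, g0, g3, g2) (y1, x0, y3, x2)"
    by auto
  from this(1) iou_argmax_transpose_box[OF this(2)] show thesis
    using that unfolding Px_transpose_box by simp
qed

theorem theorem2:
  fixes g0 g1 g2 g3 :: real and L U :: "nat \<Rightarrow> real" and zs :: box
  assumes "g0 < g2" and "g1 < g3"
    and "\<forall>i<4. L i \<le> U i" and "L 2 > 0" and "L 3 > 0"
    and "zs \<in> feas L U"
    and "\<forall>z\<in>feas L U. iou z (g0,g1,g2,g3) \<le> iou zs (g0,g1,g2,g3)"
  shows "\<exists>z'\<in>Cs L U (g0,g1,g2,g3) \<inter> feas L U. iou z' (g0,g1,g2,g3) = iou zs (g0,g1,g2,g3)"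
proof -
  let ?g = "(g0, g1, g2, g3)"
  obtain z0 z1 z2 z3 where zs: "zs = (z0, z1, z2, z3)" by (cases zs)
  have g: "g0 < g2" "g1 < g3" and L: "0 \<le> L 2" "0 \<le> L 3" using assms(1,2,4,5) by simp_all
  have max: "iou_argmax L U ?g zs" using assms(6,7) unfolding is_arg_max_linorder by blast
  obtain x0 x2 where x: "(x0, x2) \<in> Px L U ?g" "iou_argmax L U ?g (x0, z1, x2, z3)"
    using iou_argmax_x_in_Px[OF g L max[unfolded zs]] .
  obtain y1 y3 where y: "(y1, y3) \<in> Py L U ?g" "iou_argmax L U ?g (x0, y1, x2, y3)"
    using iou_argmax_y_in_Py[OF g L x(2)] .
  have "(x0, y1, x2, y3) \<in> Cs L U ?g"
    using x(1) y(1) unfolding Cs_def by force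
  moreover have "(x0, y1, x2, y3) \<in> feas L U"
    "iou (x0, y1, x2, y3) ?g \<le> iou zs ?g" "iou zs ?g \<le> iou (x0, y1, x2, y3) ?g"
    using y(2) max unfolding is_arg_max_linorder by blast+
  ultimately show ?thesis by (intro bexI[of _ "(x0, y1, x2, y3)"]) auto
qed

end
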